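(* Let $E,E':\mathcal P N\times Ł_n^S\to Ł_n$ be homogeneous $Ł_n$-valued effectivity functions. Then $E=E'$ if and only if $E^\sharp=E'^\sharp$, where $E^\sharp$ denotes the restriction of $E$ to $\mathcal P N\times Ł_1^S$.
   Context: For a positive integer $n$ let $Ł_n=\{0,\frac1n,\dots,1\}$ with $\neg x=1-x$, $x\oplus y=\min(x+y,1)$, $x\odot y=\max(x+y-1,0)$, applied pointwise to functions in $Ł_n^S$. $Ł_1^S=\{0,1\}^S\subseteq Ł_n^S$. $N$ is a finite set, $S$ a set. An $Ł_n$-valued effectivity function is any map $E:\mathcal P N\times Ł_n^S\to Ł_n$; it is homogeneous if $E(C,f\oplus f)=E(C,f)\oplus E(C,f)$ and $E(C,f\odot f)=E(C,f)\odot E(C,f)$ for all $C\subseteq N$, $f\in Ł_n^S$. *)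

theory Defs
  imports Complex_Main "HOL-Library.FuncSet"
begin

definition Luk :: "nat \<Rightarrow> real set" where
  "Luk n = {real k / real n | k. k \<le> n}"

definition luk_oplus :: "real \<Rightarrow> real \<Rightarrow> real" where
  "luk_oplus x y = min (x + y) 1"

definition luk_odot :: "real \<Rightarrow> real \<Rightarrow> real" where
  "luk_odot x y = max (x + y - 1) 0"

definition fun_oplus :: "'s set \<Rightarrow> ('s \<Rightarrow> real) \<Rightarrow> ('s \<Rightarrow> real) \<Rightarrow> ('s \<Rightarrow> real)" where
  "fun_oplus S f g = restrict (\<lambda>s. luk_oplus (f s) (g s)) S"

definition fun_odot :: "'s set \<Rightarrow> ('s \<Rightarrow> real) \<Rightarrow> ('s \<Rightarrow> real) \<Rightarrow> ('s \<Rightarrow> real)" where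
  "fun_odot S f g = restrict (\<lambda>s. luk_odot (f s) (g s)) S"

definition eff_fun :: "nat \<Rightarrow> 'a set \<Rightarrow> 's set \<Rightarrow> ('a set \<Rightarrow> ('s \<Rightarrow> real) \<Rightarrow> real) \<Rightarrow> bool" where
  "eff_fun n N S E \<longleftrightarrow> (\<forall>C f. C \<subseteq> N \<and> f \<in> S \<rightarrow>\<^sub>E Luk n \<longrightarrow> E C f \<in> Luk n)"

definition homogeneous :: "nat \<Rightarrow> 'a set \<Rightarrow> 's set \<Rightarrow> ('a set \<Rightarrow> ('s \<Rightarrow> real) \<Rightarrow> real) \<Rightarrow> bool" where
  "homogeneous n N S E \<longleftrightarrow> (\<forall>C f. C \<subseteq> N \<and> f \<in> S \<rightarrow>\<^sub>E Luk n \<longrightarrow>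
      E C (fun_oplus S f f) = luk_oplus (E C f) (E C f) \<and>
      E C (fun_odot S f f) = luk_odot (E C f) (E C f))"

end

theory Submission
  imports Defs
begin

text \<open>
  The ramp functions x \<mapsto> max 0 (min 1 (2^k x - j)) with j < 2^k arise from the identity
  by iterating the doublings x \<oplus> x and x \<odot> x, so a homogeneous effectivity function
  commutes with every ramp applied pointwise. Two distinct values x < y of L_n are separated
  by a ramp that is 0 at x, 1 at y and {0,1}-valued on L_n: choose a dyadic interval of
  length 2^-k \<le> 1/(2n) between x and the next point of L_n. Hence if E and E' differ at f,
  they already differ at the Boolean function ramp \<circ> f.
\<close>

definition ramp :: "nat \<Rightarrow> nat \<Rightarrow> real \<Rightarrow> real" where
  "ramp k j x = max 0 (min 1 (2^k * x - real j))"

lemma Luk_subset_unit_interval: "Luk n \<subseteq> {0..1}"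
  by (auto simp: Luk_def divide_le_eq)

lemma zero_in_Luk: "0 \<in> Luk n"
  unfolding Luk_def by force

lemma Luk_one: "Luk 1 = {0, 1}"
proof -
  have "Luk 1 = {real k | k. k \<le> (1::nat)}" by (simp add: Luk_def)
  also have "\<dots> = {0, 1}" using le_Suc_eq by fastforce
  finally show ?thesis .
qed

lemma Luk_one_subset:
  assumes "0 < n"
  shows "Luk 1 \<subseteq> Luk n"
proof -
  have "1 = real n / real n" using assms by simp
  then have "1 \<in> Luk n" unfolding Luk_def by blast
  then show ?thesis using zero_in_Luk unfolding Luk_one by blast
qed

lemma luk_oplus_in_Luk:
  assumes "x \<in> Luk n" "y \<in> Luk n"
  shows "luk_oplus x y \<in> Luk n"
proof -
  obtain i j where ij: "x = real i / real n" "y = real j / real n" "i \<le> n" "j \<le> n"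
    using assms by (auto simp: Luk_def)
  have sum: "x + y = real (i + j) / real n" using ij by (simp add: add_divide_distrib)
  have "luk_oplus x y = real (min (i + j) n) / real n"
  proof (cases "i + j \<le> n")
    case True
    then show ?thesis using sum by (cases "n = 0") (auto simp: luk_oplus_def divide_le_eq_1)
  next
    case False
    then show ?thesis using sum by (auto simp: luk_oplus_def min_def divide_le_eq_1)
  qed
  then show ?thesis unfolding Luk_def by fastforce
qed

lemma luk_odot_in_Luk:
  assumes "x \<in> Luk n" "y \<in> Luk n"
  shows "luk_odot x y \<in> Luk n"
proof (cases "n = 0")
  case True
  then show ?thesis using assms zero_in_Luk by (simp add: Luk_def luk_odot_def)
next
  case False
  obtain i j where ij: "x = real i / real n" "y = real j / real n" "i \<le> n" "j \<le> n"
    using assms by (auto simp: Luk_def)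
  have sum: "x + y - 1 = (real (i + j) - real n) / real n"
    using ij False by (simp add: field_simps)
  have "luk_odot x y = real (i + j - n) / real n"
  proof (cases "n \<le> i + j")
    case True
    then show ?thesis using sum by (simp add: luk_odot_def of_nat_diff)
  next
    case False
    then show ?thesis using sum by (simp add: luk_odot_def divide_nonpos_pos)
  qed
  then show ?thesis unfolding Luk_def using ij by fastforce
qed

lemma ramp_Suc_even: "ramp (Suc k) (2 * j) x = luk_oplus (ramp k j x) (ramp k j x)"
proof -
  have "2^Suc k * x - real (2 * j) = 2 * (2^k * x - real j)" by (simp add: algebra_simps)
  then show ?thesis unfolding ramp_def luk_oplus_def by (simp add: max_def min_def)
qed

lemma ramp_Suc_odd: "ramp (Suc k) (2 * j + 1) x = luk_odot (ramp k j x) (ramp k j x)"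
proof -
  have "2^Suc k * x - real (2 * j + 1) = 2 * (2^k * x - real j) - 1" by (simp add: algebra_simps)
  then show ?thesis unfolding ramp_def luk_odot_def by (simp add: max_def min_def)
qed

lemma ramp_0_0: "x \<in> {0..1} \<Longrightarrow> ramp 0 0 x = x"
  by (simp add: ramp_def)

lemma ramp_in_Luk: "x \<in> Luk n \<Longrightarrow> ramp k j x \<in> Luk n"
proof (induction k arbitrary: j)
  case 0
  have "0 \<le> x" "x \<le> 1" using Luk_subset_unit_interval[of n] "0" by auto
  then have "ramp 0 j x = (if j = 0 then x else 0)" by (simp add: ramp_def)
  then show ?case using "0" zero_in_Luk by simp
next
  case (Suc k)
  show ?case
  proof (cases "even j")
    case True
    then obtain j' where j: "j = 2 * j'" by blast
    show ?thesis unfolding j ramp_Suc_even by (intro luk_oplus_in_Luk Suc.IH Suc.prems)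
  next
    case False
    then obtain j' where j: "j = 2 * j' + 1" using oddE by blast
    show ?thesis unfolding j ramp_Suc_odd by (intro luk_odot_in_Luk Suc.IH Suc.prems)
  qed
qed

lemma homogeneous_ramp:
  assumes hom: "homogeneous n N S E" and eff: "eff_fun n N S E"
    and C: "C \<subseteq> N" and f: "f \<in> S \<rightarrow>\<^sub>E Luk n" and j: "j < 2^k"
  shows "E C (\<lambda>s\<in>S. ramp k j (f s)) = ramp k j (E C f)"
  using j
proof (induction k arbitrary: j)
  case 0
  have "(\<lambda>s\<in>S. ramp 0 0 (f s)) = f"
    using f Luk_subset_unit_interval[of n]
    by (fastforce simp: fun_eq_iff ramp_0_0 PiE_iff extensional_def)
  moreover have "E C f \<in> {0..1}"
    using eff C f Luk_subset_unit_interval[of n] unfolding eff_fun_def by blast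
  ultimately show ?case using "0" by (simp add: ramp_0_0)
next
  case (Suc k)
  define j' where "j' = j div 2"
  define g where "g = (\<lambda>s\<in>S. ramp k j' (f s))"
  have g_Luk: "g \<in> S \<rightarrow>\<^sub>E Luk n"
    using f by (auto simp: g_def PiE_iff intro: ramp_in_Luk)
  have IH: "E C g = ramp k j' (E C f)"
    unfolding g_def j'_def using Suc.prems by (intro Suc.IH) simp
  show ?case
  proof (cases "even j")
    case True
    then have j: "j = 2 * j'" by (simp add: j'_def)
    have "E C (\<lambda>s\<in>S. ramp (Suc k) j (f s)) = E C (fun_oplus S g g)"
      unfolding fun_oplus_def g_def j ramp_Suc_even by (intro arg_cong[where f = "E C"] restrict_ext) simp
    also have "\<dots> = luk_oplus (E C g) (E C g)"
      using hom C g_Luk unfolding homogeneous_def by blast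
    also have "\<dots> = ramp (Suc k) j (E C f)"
      unfolding IH j ramp_Suc_even ..
    finally show ?thesis .
  next
    case False
    then have j: "j = 2 * j' + 1" by (simp add: j'_def)
    have "E C (\<lambda>s\<in>S. ramp (Suc k) j (f s)) = E C (fun_odot S g g)"
      unfolding fun_odot_def g_def j ramp_Suc_odd by (intro arg_cong[where f = "E C"] restrict_ext) simp
    also have "\<dots> = luk_odot (E C g) (E C g)"
      using hom C g_Luk unfolding homogeneous_def by blast
    also have "\<dots> = ramp (Suc k) j (E C f)"
      unfolding IH j ramp_Suc_odd ..
    finally show ?thesis .
  qed
qed

lemma ramp_threshold:
  assumes "a < n"
  shows "\<exists>k j. j < (2::nat)^k \<and> (\<forall>i. ramp k j (real i / real n) = (if i \<le> a then 0 else 1))"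
proof -
  have n: "real n > 0" using assms by simp
  define k where "k = Suc n"
  define K :: real where "K = 2^k"
  have "real n < 2^n" using less_exp[of n] by (metis of_nat_less_iff of_nat_numeral of_nat_power)
  then have Kn: "K / real n \<ge> 2" unfolding K_def k_def using n by (simp add: le_divide_eq)
  define j where "j = nat \<lceil>K * real a / real n\<rceil>"
  have Ka_nonneg: "K * real a / real n \<ge> 0" unfolding K_def by simp
  have j_ge: "real j \<ge> K * real a / real n" and j_less: "real j < K * real a / real n + 1"
    unfolding j_def using Ka_nonneg by linarith+
  \<comment> \<open>the ramp rises on [j/K, (j+1)/K], which lies inside [a/n, (a+1)/n] since K \<ge> 2n\<close>
  have "K * real a / real n \<le> K * (real n - 1) / real n"
    using assms n by (intro divide_right_mono mult_left_mono) (auto simp: K_def)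
  also have "\<dots> = K - K / real n" using n by (simp add: field_simps)
  finally have "real j < K" using j_less Kn by linarith
  then have "j < 2^k" unfolding K_def by (metis of_nat_less_iff of_nat_numeral of_nat_power)
  moreover have "ramp k j (real i / real n) = (if i \<le> a then 0 else 1)" for i
  proof (cases "i \<le> a")
    case True
    then have "K * (real i / real n) \<le> K * real a / real n"
      using n by (simp add: K_def divide_right_mono)
    then show ?thesis using True j_ge unfolding ramp_def K_def[symmetric] by simp
  next
    case False
    then have "K * (real a + 1) / real n \<le> K * (real i / real n)"
      using n by (simp add: K_def divide_right_mono)
    moreover have "K * (real a + 1) / real n = K * real a / real n + K / real n"
      by (simp add: distrib_left add_divide_distrib)
    ultimately have "K * (real i / real n) - real j \<ge> 1" using j_less Kn by linarith
    then show ?thesis using False unfolding ramp_def K_def[symmetric] by simp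
  qed
  ultimately show ?thesis by blast
qed

lemma ramp_separates_Luk:
  assumes "x \<in> Luk n" "y \<in> Luk n" "x \<noteq> y"
  shows "\<exists>k j. j < (2::nat)^k \<and> ramp k j x \<noteq> ramp k j y \<and> ramp k j ` Luk n \<subseteq> {0, 1}"
proof -
  have separate: "\<exists>k j. j < (2::nat)^k \<and> ramp k j u \<noteq> ramp k j v \<and> ramp k j ` Luk n \<subseteq> {0, 1}"
    if uv: "u \<in> Luk n" "v \<in> Luk n" "u < v" for u v
  proof -
    obtain a b where ab: "u = real a / real n" "v = real b / real n" "b \<le> n"
      using uv(1,2) by (auto simp: Luk_def)
    have "a < b" using uv(3) ab by (cases "n = 0") (auto simp: divide_less_cancel)
    then obtain k j where "j < (2::nat)^k"
      and threshold: "\<And>i. ramp k j (real i / real n) = (if i \<le> a then 0 else 1)"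
      using ramp_threshold[of a n] ab by auto
    moreover have "ramp k j ` Luk n \<subseteq> {0, 1}" by (auto simp: Luk_def threshold)
    moreover have "ramp k j u = 0" "ramp k j v = 1" using \<open>a < b\<close> ab threshold by auto
    ultimately show ?thesis by fastforce
  qed
  show ?thesis
    using assms separate[of x y] separate[of y x] by (cases "x < y") (auto, metis)
qed

theorem mainTheorem3:
  fixes n :: nat and N :: "'a set" and S :: "'s set"
    and E E' :: "'a set \<Rightarrow> ('s \<Rightarrow> real) \<Rightarrow> real"
  assumes "n > 0" and "finite N"
    and "eff_fun n N S E" and "eff_fun n N S E'"
    and "homogeneous n N S E" and "homogeneous n N S E'"
  shows "(\<forall>C f. C \<subseteq> N \<and> f \<in> S \<rightarrow>\<^sub>E Luk n \<longrightarrow> E C f = E' C f) \<longleftrightarrow>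
         (\<forall>C f. C \<subseteq> N \<and> f \<in> S \<rightarrow>\<^sub>E Luk 1 \<longrightarrow> E C f = E' C f)"
proof
  assume "\<forall>C f. C \<subseteq> N \<and> f \<in> S \<rightarrow>\<^sub>E Luk n \<longrightarrow> E C f = E' C f"
  then show "\<forall>C f. C \<subseteq> N \<and> f \<in> S \<rightarrow>\<^sub>E Luk 1 \<longrightarrow> E C f = E' C f"
    using PiE_mono[OF Luk_one_subset[OF \<open>n > 0\<close>]] by blast
next
  assume boolean_eq: "\<forall>C f. C \<subseteq> N \<and> f \<in> S \<rightarrow>\<^sub>E Luk 1 \<longrightarrow> E C f = E' C f"
  show "\<forall>C f. C \<subseteq> N \<and> f \<in> S \<rightarrow>\<^sub>E Luk n \<longrightarrow> E C f = E' C f"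
  proof (intro allI impI, rule ccontr)
    fix C f assume Cf: "C \<subseteq> N \<and> f \<in> S \<rightarrow>\<^sub>E Luk n" and "E C f \<noteq> E' C f"
    moreover have "E C f \<in> Luk n" "E' C f \<in> Luk n" using assms(3,4) Cf by (auto simp: eff_fun_def)
    ultimately obtain k j where kj: "j < 2^k" "ramp k j (E C f) \<noteq> ramp k j (E' C f)"
      and boolean: "ramp k j ` Luk n \<subseteq> {0, 1}"
      using ramp_separates_Luk by blast
    define g where "g = (\<lambda>s\<in>S. ramp k j (f s))"
    have "g \<in> S \<rightarrow>\<^sub>E Luk 1" using Cf boolean unfolding Luk_one by (auto simp: g_def)
    then have "E C g = E' C g" using boolean_eq Cf by blast
    moreover have "E C g = ramp k j (E C f)" "E' C g = ramp k j (E' C f)"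
      using homogeneous_ramp[OF assms(5,3)] homogeneous_ramp[OF assms(6,4)] Cf kj(1)
      by (auto simp: g_def)
    ultimately show False using kj(2) by simp
  qed
qed

end
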